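(* $\mathrm{CCC}=\mathrm{CCC}^{\perp\perp}$, where $\mathrm{CCC}$ is the class of ccc compact spaces.
   Context: For a class $\mathcal C$ of compact spaces, $\mathcal C^\perp$ is the class of compact spaces $K$ such that every continuous image of $K$ belonging to $\mathcal C$ is metrizable, and $\mathcal C^{\perp\perp}=(\mathcal C^\perp)^\perp$. A compact space is ccc if it has no uncountable family of pairwise disjoint nonempty open sets. *)

theory Defs
  imports "HOL-Analysis.Analysis"
begin

text \<open>Compact spaces are compact Hausdorff spaces.\<close>
definition compact_Hausdorff :: "'a topology \<Rightarrow> bool" where
  "compact_Hausdorff X \<longleftrightarrow> compact_space X \<and> Hausdorff_space X"

definition ccc_space :: "'a topology \<Rightarrow> bool" where
  "ccc_space X \<longleftrightarrow> (\<forall>\<U>. (\<forall>U\<in>\<U>. openin X U \<and> U \<noteq> {}) \<and> disjoint \<U> \<longrightarrow> countable \<U>)"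

definition CCC :: "'a topology \<Rightarrow> bool" where
  "CCC X \<longleftrightarrow> compact_Hausdorff X \<and> ccc_space X"

definition perp :: "('b topology \<Rightarrow> bool) \<Rightarrow> 'a topology \<Rightarrow> bool" where
  "perp C K \<longleftrightarrow> compact_Hausdorff K \<and>
     (\<forall>(L::'b topology) f. continuous_map K L f \<and> f ` topspace K = topspace L \<and> C L
        \<longrightarrow> metrizable_space L)"

text \<open>Continuous images of a compact Hausdorff space on type 'a are, up to homeomorphism,
  exactly quotient spaces whose points are fibres, i.e. spaces on type 'a set. Hence:\<close>
definition CCC_perp :: "'a topology \<Rightarrow> bool" where
  "CCC_perp K \<longleftrightarrow> perp (CCC :: 'a set topology \<Rightarrow> bool) K"

definition CCC_perp_perp :: "'a topology \<Rightarrow> bool" where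
  "CCC_perp_perp K \<longleftrightarrow> perp (CCC_perp :: 'a set topology \<Rightarrow> bool) K"

end

theory Submission
  imports Defs
begin

lemma inj_on_imp_homeomorphic_map:
  fixes X :: "'a topology" and h :: "'a \<Rightarrow> 'b"
  assumes "inj_on h (topspace X)"
  obtains Y :: "'b topology" where "homeomorphic_map X Y h"
proof -
  define g where "g = inv_into (topspace X) h"
  define Y where "Y = pullback_topology (h ` topspace X) g X"
  have gh: "\<And>x. x \<in> topspace X \<Longrightarrow> g (h x) = x"
    using assms by (simp add: g_def)
  have "continuous_map Y X g"
    unfolding Y_def by (rule continuous_map_pullback[OF continuous_map_id, simplified])
  moreover have "continuous_map X Y h"
    unfolding Y_def
    by (rule continuous_map_pullback') (auto intro: continuous_map_eq[OF continuous_map_id] simp: gh)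
  moreover have "topspace Y = h ` topspace X"
    unfolding Y_def topspace_pullback_topology using gh by auto
  ultimately have "homeomorphic_maps X Y h g"
    unfolding homeomorphic_maps_def using gh by auto
  then show ?thesis
    using that homeomorphic_map_maps by blast
qed

lemma homeomorphic_space_singletons:
  fixes L :: "'a topology"
  obtains M :: "'a set topology" where "L homeomorphic_space M"
proof -
  have "inj_on (\<lambda>x. {x}) (topspace L)"
    by (simp add: inj_on_def)
  then obtain M :: "'a set topology" where "homeomorphic_map L M (\<lambda>x. {x})"
    by (rule inj_on_imp_homeomorphic_map)
  then show ?thesis
    by (rule that[OF homeomorphic_map_imp_homeomorphic_space])
qed

lemma homeomorphic_map_fibres:
  fixes K :: "'a topology"
  assumes "F ` topspace K = topspace L"
  obtains L' :: "'a set topology" where "homeomorphic_map L L' (\<lambda>y. {x \<in> topspace K. F x = y})"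
proof -
  have "inj_on (\<lambda>y. {x \<in> topspace K. F x = y}) (topspace L)"
  proof (rule inj_onI)
    fix y y' assume "y \<in> topspace L" and eq: "{x \<in> topspace K. F x = y} = {x \<in> topspace K. F x = y'}"
    then obtain x where "x \<in> topspace K" "F x = y"
      using assms by (metis imageE)
    then show "y = y'"
      using eq by blast
  qed
  then obtain L' :: "'a set topology" where "homeomorphic_map L L' (\<lambda>y. {x \<in> topspace K. F x = y})"
    by (rule inj_on_imp_homeomorphic_map)
  then show ?thesis
    by (rule that)
qed

lemma ccc_space_continuous_map_image:
  assumes f: "continuous_map X Y f" "f ` topspace X = topspace Y" and "ccc_space X"
  shows "ccc_space Y"
  unfolding ccc_space_def
proof (intro allI impI)
  fix \<V> assume "(\<forall>V\<in>\<V>. openin Y V \<and> V \<noteq> {}) \<and> disjoint \<V>"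
  then have \<V>: "\<And>V. V \<in> \<V> \<Longrightarrow> openin Y V" "\<And>V. V \<in> \<V> \<Longrightarrow> V \<noteq> {}" "disjoint \<V>"
    by auto
  define pre where "pre V = {x \<in> topspace X. f x \<in> V}" for V
  have pre_ne: "pre V \<noteq> {}" if V: "V \<in> \<V>" for V
  proof -
    obtain y where "y \<in> V"
      using \<V>(2)[OF V] by blast
    moreover have "V \<subseteq> f ` topspace X"
      using \<V>(1)[OF V] f(2) openin_subset by metis
    ultimately show ?thesis
      unfolding pre_def by blast
  qed
  have pre_disjnt: "disjnt (pre V) (pre V')" if "V \<in> \<V>" "V' \<in> \<V>" "V \<noteq> V'" for V V'
    using pairwiseD[OF \<V>(3) that] unfolding pre_def disjnt_def by blast
  have "inj_on pre \<V>"
    using pre_ne pre_disjnt by (metis disjnt_self_iff_empty inj_onI)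
  moreover have "countable (pre ` \<V>)"
  proof -
    have "\<forall>U\<in>pre ` \<V>. openin X U \<and> U \<noteq> {}"
      using \<V>(1) pre_ne openin_continuous_map_preimage[OF f(1)] unfolding pre_def by blast
    moreover have "disjoint (pre ` \<V>)"
      using pre_disjnt by (intro pairwise_imageI) blast
    ultimately show ?thesis
      using \<open>ccc_space X\<close> unfolding ccc_space_def by blast
  qed
  ultimately show "countable \<V>"
    using countable_image_inj_on by blast
qed

lemma homeomorphic_ccc_space:
  assumes "X homeomorphic_space Y"
  shows "ccc_space X \<longleftrightarrow> ccc_space Y"
proof -
  obtain f g where "homeomorphic_maps X Y f g"
    using assms homeomorphic_space_def by blast
  then have "homeomorphic_map X Y f" "homeomorphic_map Y X g"
    using homeomorphic_maps_map by blast+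
  then show ?thesis
    by (meson ccc_space_continuous_map_image homeomorphic_imp_continuous_map
        homeomorphic_imp_surjective_map)
qed

lemma homeomorphic_CCC:
  assumes "X homeomorphic_space Y"
  shows "CCC X \<longleftrightarrow> CCC Y"
  unfolding CCC_def compact_Hausdorff_def
  using homeomorphic_ccc_space[OF assms] homeomorphic_compact_space[OF assms]
    homeomorphic_Hausdorff_space[OF assms] by simp

lemma maximal_disjoint_subfamily:
  obtains \<P> where "\<P> \<subseteq> \<G>" "disjoint \<P>"
    "\<And>G. G \<in> \<G> \<Longrightarrow> G \<noteq> {} \<Longrightarrow> \<exists>P\<in>\<P>. G \<inter> P \<noteq> {}"
proof -
  define \<AA> where "\<AA> = {\<P>. \<P> \<subseteq> \<G> \<and> disjoint \<P>}"
  have "\<exists>\<P>\<in>\<AA>. \<forall>\<Q>\<in>\<AA>. \<P> \<subseteq> \<Q> \<longrightarrow> \<Q> = \<P>"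
  proof (rule subset_Zorn')
    fix \<C> assume "subset.chain \<AA> \<C>"
    then have "\<C> \<subseteq> \<AA>" "chain\<^sub>\<subseteq> \<C>"
      unfolding subset_chain_def chain_subset_def by auto
    then show "\<Union>\<C> \<in> \<AA>"
      unfolding \<AA>_def by (auto intro: pairwise_chain_Union)
  qed
  then obtain \<P> where "\<P> \<in> \<AA>" and max: "\<And>\<Q>. \<Q> \<in> \<AA> \<Longrightarrow> \<P> \<subseteq> \<Q> \<Longrightarrow> \<Q> = \<P>"
    by blast
  then have \<P>: "\<P> \<subseteq> \<G>" "disjoint \<P>"
    unfolding \<AA>_def by auto
  have "\<exists>P\<in>\<P>. G \<inter> P \<noteq> {}" if G: "G \<in> \<G>" "G \<noteq> {}" for G
  proof (rule ccontr)
    assume "\<not> (\<exists>P\<in>\<P>. G \<inter> P \<noteq> {})"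
    then have "G \<notin> \<P>" "pairwise disjnt (insert G \<P>)"
      using G \<P>(2) by (auto simp: pairwise_insert disjnt_def)
    moreover have "insert G \<P> \<in> \<AA>"
      using G \<P> calculation(2) unfolding \<AA>_def by blast
    ultimately show False
      using max[of "insert G \<P>"] by blast
  qed
  with \<P> that show ?thesis
    by blast
qed

lemma (in Metric_space) mtotally_bounded_imp_second_countable:
  assumes "mtotally_bounded M"
  shows "second_countable mtopology"
proof -
  have "\<forall>n. \<exists>F. finite F \<and> F \<subseteq> M \<and> M \<subseteq> (\<Union>x\<in>F. mball x (1 / Suc n))"
    using assms unfolding mtotally_bounded_def by (meson of_nat_0_less_iff divide_pos_pos zero_less_Suc zero_less_one)
  then obtain F where F: "\<And>n. finite (F n)" "\<And>n. F n \<subseteq> M"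
    "\<And>n. M \<subseteq> (\<Union>x\<in>F n. mball x (1 / Suc n))"
    by metis
  define \<B> where "\<B> = (\<Union>n. (\<lambda>x. mball x (1 / Suc n)) ` F n)"
  have "countable \<B>"
    unfolding \<B>_def by (rule countable_UN) (simp_all add: F(1) countable_finite)
  moreover have "\<exists>V\<in>\<B>. x \<in> V \<and> V \<subseteq> U" if U: "openin mtopology U" "x \<in> U" for U x
  proof -
    obtain r where "r > 0" "mball x r \<subseteq> U"
      using U by (meson openin_mtopology)
    obtain n where n: "inverse (Suc n) < r / 2"
      using reals_Archimedean \<open>r > 0\<close> half_gt_zero by blast
    have "x \<in> M"
      using U by (meson openin_mtopology subsetD)
    then obtain y where y: "y \<in> F n" "x \<in> mball y (1 / Suc n)"
      using F(3) by blast
    have "mball y (1 / Suc n) \<subseteq> mball x r"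
    proof (rule mball_subset)
      show "d y x + 1 / Suc n \<le> r"
        using y n by (auto simp: inverse_eq_divide)
    qed (use \<open>x \<in> M\<close> in simp)
    then show ?thesis
      unfolding \<B>_def using y \<open>mball x r \<subseteq> U\<close> by blast
  qed
  moreover have "\<forall>V\<in>\<B>. openin mtopology V"
    unfolding \<B>_def by blast
  ultimately show ?thesis
    unfolding second_countable_def by blast
qed

lemma compact_metrizable_imp_second_countable:
  assumes "compact_space X" "metrizable_space X"
  shows "second_countable X"
  using assms Metric_space.compact_space_eq_mcomplete_mtotally_bounded
    Metric_space.mtotally_bounded_imp_second_countable
  unfolding metrizable_space_def by metis

lemma openin_closed_map_fibre_subset:
  assumes "closed_map X Y f" "openin X U"
  shows "openin Y {y \<in> topspace Y. {x \<in> topspace X. f x = y} \<subseteq> U}"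
proof -
  have "{y \<in> topspace Y. {x \<in> topspace X. f x = y} \<subseteq> U} = topspace Y - f ` (topspace X - U)"
    by auto
  moreover have "closedin Y (f ` (topspace X - U))"
    using assms unfolding closed_map_def by (simp add: closedin_diff)
  ultimately show ?thesis
    by (simp add: openin_diff)
qed

lemma second_countable_perfect_map_image:
  assumes f: "perfect_map X Y f" and "second_countable X"
  shows "second_countable Y"
proof -
  obtain \<B> where \<B>: "countable \<B>" "\<And>V. V \<in> \<B> \<Longrightarrow> openin X V"
    "\<And>U x. openin X U \<Longrightarrow> x \<in> U \<Longrightarrow> \<exists>V\<in>\<B>. x \<in> V \<and> V \<subseteq> U"
    using \<open>second_countable X\<close> unfolding second_countable_def by metis
  have closed: "closed_map X Y f"
    and fibre: "\<And>y. y \<in> topspace Y \<Longrightarrow> compactin X {x \<in> topspace X. f x = y}"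
    and surj: "f ` topspace X = topspace Y"
    using f unfolding perfect_map_def proper_map_def by auto
  define small where "small U = {y \<in> topspace Y. {x \<in> topspace X. f x = y} \<subseteq> U}" for U
  define \<C> where "\<C> = (\<lambda>\<F>. small (\<Union>\<F>)) ` {\<F>. finite \<F> \<and> \<F> \<subseteq> \<B>}"
  have "countable \<C>"
    unfolding \<C>_def by (intro countable_image countable_Collect_finite_subset \<B>(1))
  moreover have "openin Y V" if "V \<in> \<C>" for V
  proof -
    obtain \<F> where "\<F> \<subseteq> \<B>" "V = small (\<Union>\<F>)"
      using \<open>V \<in> \<C>\<close> unfolding \<C>_def by blast
    moreover have "openin X (\<Union>\<F>)"
      using \<B>(2) \<open>\<F> \<subseteq> \<B>\<close> by blast
    ultimately show ?thesis
      unfolding small_def using openin_closed_map_fibre_subset[OF closed] by blast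
  qed
  moreover have "\<exists>V\<in>\<C>. y \<in> V \<and> V \<subseteq> W" if W: "openin Y W" "y \<in> W" for W y
  proof -
    have y: "y \<in> topspace Y"
      using W openin_subset by blast
    define \<W> where "\<W> = {V\<in>\<B>. V \<subseteq> {x \<in> topspace X. f x \<in> W}}"
    have "\<And>V. V \<in> \<W> \<Longrightarrow> openin X V"
      using \<B>(2) unfolding \<W>_def by blast
    moreover have "{x \<in> topspace X. f x = y} \<subseteq> \<Union>\<W>"
      using \<B>(3)[OF openin_continuous_map_preimage[OF perfect_imp_continuous_map[OF f] W(1)]] W(2)
      unfolding \<W>_def by blast
    ultimately have "\<exists>\<F>. finite \<F> \<and> \<F> \<subseteq> \<W> \<and> {x \<in> topspace X. f x = y} \<subseteq> \<Union>\<F>"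
      by (rule compactinD[OF fibre[OF y]])
    then obtain \<F> where \<F>: "finite \<F>" "\<F> \<subseteq> \<W>" "{x \<in> topspace X. f x = y} \<subseteq> \<Union>\<F>"
      by blast
    then have "small (\<Union>\<F>) \<in> \<C>"
      unfolding \<C>_def \<W>_def by blast
    moreover have "y \<in> small (\<Union>\<F>)"
      unfolding small_def using \<F>(3) y by blast
    moreover have "small (\<Union>\<F>) \<subseteq> W"
    proof
      fix y' assume y': "y' \<in> small (\<Union>\<F>)"
      then obtain x where "x \<in> topspace X" "f x = y'"
        unfolding small_def surj[symmetric] by blast
      then have "x \<in> \<Union>\<F>"
        using y' unfolding small_def by blast
      then show "y' \<in> W"
        using \<F>(2) \<open>f x = y'\<close> unfolding \<W>_def by blast
    qed
    ultimately show ?thesis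
      by blast
  qed
  ultimately show ?thesis
    unfolding second_countable_def by blast
qed

lemma compact_injection_into_metrizable_imp_metrizable:
  assumes "compact_space X" "continuous_map X Y f" "inj_on f (topspace X)" "metrizable_space Y"
  shows "metrizable_space X"
proof -
  have "embedding_map X Y f"
    using assms continuous_imp_embedding_map metrizable_imp_Hausdorff_space by blast
  then have "X homeomorphic_space subtopology Y (f ` topspace X)"
    by (rule embedding_map_imp_homeomorphic_space)
  then show ?thesis
    using assms(4) homeomorphic_metrizable_space metrizable_space_subtopology by blast
qed

lemma metrizable_space_countable_product_euclideanreal:
  assumes "countable I"
  shows "metrizable_space (product_topology (\<lambda>_. euclideanreal) I)"
  unfolding metrizable_space_product_topology
  using assms by (auto intro: countable_subset metrizable_space_euclidean)

lemma compact_countably_separated_imp_metrizable: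
  assumes "compact_space X" "countable P"
    and cont: "\<And>p. p \<in> P \<Longrightarrow> continuous_map X euclideanreal (\<phi> p)"
    and sep: "\<And>x y. x \<in> topspace X \<Longrightarrow> y \<in> topspace X \<Longrightarrow> x \<noteq> y \<Longrightarrow> \<exists>p\<in>P. \<phi> p x \<noteq> \<phi> p y"
  shows "metrizable_space X"
proof (rule compact_injection_into_metrizable_imp_metrizable)
  show "continuous_map X (product_topology (\<lambda>_. euclideanreal) P) (\<lambda>x. \<lambda>p\<in>P. \<phi> p x)"
    using cont by (auto simp: continuous_map_componentwise)
  show "inj_on (\<lambda>x. \<lambda>p\<in>P. \<phi> p x) (topspace X)"
    by (rule inj_onI) (metis sep restrict_apply')
qed (use assms metrizable_space_countable_product_euclideanreal in auto)

lemma compact_Hausdorff_second_countable_imp_metrizable: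
  assumes "compact_space X" "Hausdorff_space X" "second_countable X"
  shows "metrizable_space X"
proof -
  obtain \<B> where \<B>: "countable \<B>" "\<And>V. V \<in> \<B> \<Longrightarrow> openin X V"
    "\<And>U x. openin X U \<Longrightarrow> x \<in> U \<Longrightarrow> \<exists>V\<in>\<B>. x \<in> V \<and> V \<subseteq> U"
    using assms(3) unfolding second_countable_def by metis
  have "normal_space X"
    using assms compact_Hausdorff_or_regular_imp_normal_space by blast
  define P where "P = {(B, C) \<in> \<B> \<times> \<B>. X closure_of B \<subseteq> C}"
  have "countable P"
    unfolding P_def using \<B>(1) by (auto intro: countable_subset[of _ "\<B> \<times> \<B>"])
  have "\<exists>\<phi>. continuous_map X euclideanreal \<phi> \<and>
      \<phi> ` (X closure_of fst p) \<subseteq> {0} \<and> \<phi> ` (topspace X - snd p) \<subseteq> {1}"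
    if "p \<in> P" for p
  proof -
    have "closedin X (topspace X - snd p)"
      using that \<B>(2) unfolding P_def by (auto intro!: closedin_diff)
    moreover have "disjnt (X closure_of fst p) (topspace X - snd p)"
      using that unfolding P_def disjnt_def by auto
    ultimately show ?thesis
      using Urysohn_lemma_alt[OF \<open>normal_space X\<close> closedin_closure_of] by metis
  qed
  then obtain \<phi> where \<phi>: "\<And>p. p \<in> P \<Longrightarrow> continuous_map X euclideanreal (\<phi> p)"
    "\<And>p. p \<in> P \<Longrightarrow> \<phi> p ` (X closure_of fst p) \<subseteq> {0}"
    "\<And>p. p \<in> P \<Longrightarrow> \<phi> p ` (topspace X - snd p) \<subseteq> {1}"
    by metis
  show ?thesis
  proof (rule compact_countably_separated_imp_metrizable)
    fix x y assume xy: "x \<in> topspace X" "y \<in> topspace X" "x \<noteq> y"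
    obtain W where "openin X W" "x \<in> W" "y \<notin> W"
      using xy Hausdorff_imp_t1_space[OF assms(2)] unfolding t1_space_def by blast
    then obtain C where C: "C \<in> \<B>" "x \<in> C" "y \<notin> C"
      using \<B>(3) by blast
    have "regular_space X"
      using assms compact_Hausdorff_imp_regular_space by blast
    then obtain U V where UV: "openin X U" "closedin X V" "x \<in> U" "U \<subseteq> V" "V \<subseteq> C"
      using C \<B>(2) unfolding neighbourhood_base_of_closedin[symmetric] neighbourhood_base_of by metis
    obtain B where B: "B \<in> \<B>" "x \<in> B" "B \<subseteq> U"
      using \<B>(3) UV by metis
    have "X closure_of B \<subseteq> C"
      using UV B closure_of_minimal by (metis order_trans)
    then have "(B, C) \<in> P"
      unfolding P_def using B C by blast
    moreover have "x \<in> X closure_of B"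
      using B xy closure_of_subset \<B>(2) openin_subset by (metis subsetD)
    ultimately have "\<phi> (B, C) x = 0" "\<phi> (B, C) y = 1"
      using \<phi>(2,3)[of "(B, C)"] xy C by auto
    then show "\<exists>p\<in>P. \<phi> p x \<noteq> \<phi> p y"
      using \<open>(B, C) \<in> P\<close> by force
  qed (use assms \<open>countable P\<close> \<phi>(1) in auto)
qed

lemma metrizable_space_continuous_map_image:
  assumes "compact_space X" "metrizable_space X" "Hausdorff_space Y"
    and "continuous_map X Y f" "f ` topspace X = topspace Y"
  shows "metrizable_space Y"
proof (rule compact_Hausdorff_second_countable_imp_metrizable)
  show "compact_space Y"
    using assms by (metis compact_space_def image_compactin)
  have "perfect_map X Y f"
    unfolding perfect_map_def
    using assms continuous_imp_proper_map Hausdorff_imp_kc_space by blast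
  then show "second_countable Y"
    using assms second_countable_perfect_map_image compact_metrizable_imp_second_countable by blast
qed (use assms in auto)

definition hedgehog :: "'a topology \<Rightarrow> 'a \<Rightarrow> ('i \<Rightarrow> 'a set) \<Rightarrow> 'i set \<Rightarrow> bool" where
  "hedgehog L z S I \<longleftrightarrow> z \<in> topspace L \<and> (\<forall>i\<in>I. openin L (S i) \<and> S i \<noteq> {}) \<and>
     disjoint_family_on S I \<and> (\<Union>i\<in>I. S i) = topspace L - {z}"

definition countable_subhedgehogs_metrizable :: "'a topology \<Rightarrow> 'a \<Rightarrow> ('i \<Rightarrow> 'a set) \<Rightarrow> 'i set \<Rightarrow> bool"
  where "countable_subhedgehogs_metrizable L z S I \<longleftrightarrow>
    (\<forall>E\<subseteq>I. countable E \<longrightarrow> metrizable_space (subtopology L (insert z (\<Union>i\<in>E. S i))))"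

lemma
  assumes "hedgehog L z S I"
  shows hedgehog_centre: "z \<in> topspace L"
    and hedgehog_openin_spine: "i \<in> I \<Longrightarrow> openin L (S i)"
    and hedgehog_spine_nonempty: "i \<in> I \<Longrightarrow> S i \<noteq> {}"
    and hedgehog_spine_subset: "i \<in> I \<Longrightarrow> S i \<subseteq> topspace L - {z}"
    and hedgehog_covers: "topspace L - {z} \<subseteq> (\<Union>i\<in>I. S i)"
  using assms unfolding hedgehog_def by auto

lemma hedgehog_spines_eq:
  assumes "hedgehog L z S I" "i \<in> I" "j \<in> I" "x \<in> S i" "x \<in> S j"
  shows "i = j"
  using assms unfolding hedgehog_def disjoint_family_on_def by blast

lemma hedgehog_nhds_contain_almost_all_spines:
  assumes "compact_space L" and L: "hedgehog L z S I" and W: "openin L W" "z \<in> W"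
  shows "finite {i \<in> I. \<not> S i \<subseteq> W}"
proof -
  have "compactin L (topspace L - W)"
    using assms(1) W(1) by (simp add: closedin_compact_space closedin_diff)
  moreover have "\<And>U. U \<in> S ` I \<Longrightarrow> openin L U"
    using hedgehog_openin_spine[OF L] by blast
  moreover have "topspace L - W \<subseteq> \<Union> (S ` I)"
    using hedgehog_covers[OF L] W(2) by blast
  ultimately have "\<exists>\<F>. finite \<F> \<and> \<F> \<subseteq> S ` I \<and> topspace L - W \<subseteq> \<Union>\<F>"
    by (rule compactinD)
  then obtain F where F: "finite F" "F \<subseteq> I" "topspace L - W \<subseteq> (\<Union>i\<in>F. S i)"
    by (metis finite_subset_image)
  have "{i \<in> I. \<not> S i \<subseteq> W} \<subseteq> F"
  proof
    fix i assume "i \<in> {i \<in> I. \<not> S i \<subseteq> W}"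
    then obtain x where "i \<in> I" "x \<in> S i" "x \<notin> W"
      by blast
    moreover have "x \<in> topspace L"
      using hedgehog_spine_subset[OF L \<open>i \<in> I\<close>] \<open>x \<in> S i\<close> by blast
    ultimately obtain j where "j \<in> F" "x \<in> S j"
      using F(3) by blast
    then show "i \<in> F"
      using hedgehog_spines_eq[OF L \<open>i \<in> I\<close> _ \<open>x \<in> S i\<close>] F(2) by blast
  qed
  then show ?thesis
    using F(1) finite_subset by blast
qed

lemma hedgehog_not_metrizable:
  assumes "compact_space L" "Hausdorff_space L" and L: "hedgehog L z S I" and "uncountable I"
  shows "\<not> metrizable_space L"
proof
  assume "metrizable_space L"
  then obtain \<B> where \<B>: "countable \<B>" "\<And>V. V \<in> \<B> \<Longrightarrow> openin L V"
    "\<And>U. openin L U \<Longrightarrow> z \<in> U \<Longrightarrow> \<exists>V\<in>\<B>. z \<in> V \<and> V \<subseteq> U"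
    using hedgehog_centre[OF L] metrizable_imp_first_countable unfolding first_countable_def
    by metis
  define J where "J = (\<Union>V\<in>{V\<in>\<B>. z \<in> V}. {i\<in>I. \<not> S i \<subseteq> V})"
  have "countable J"
    unfolding J_def using \<B>(1,2) hedgehog_nhds_contain_almost_all_spines[OF assms(1) L]
    by (intro countable_UN) (auto intro: countable_finite)
  then obtain i where i: "i \<in> I" "i \<notin> J"
    using \<open>uncountable I\<close> by (metis countable_subset subsetI)
  obtain x where "x \<in> S i"
    using hedgehog_spine_nonempty[OF L i(1)] by blast
  then have x: "x \<in> topspace L" "x \<noteq> z"
    using hedgehog_spine_subset[OF L i(1)] by auto
  have "openin L (topspace L - {x})"
    using closedin_Hausdorff_singleton[OF assms(2) x(1)] by blast
  moreover have "z \<in> topspace L - {x}"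
    using hedgehog_centre[OF L] x(2) by blast
  ultimately obtain V where "V \<in> \<B>" "z \<in> V" "x \<notin> V"
    using \<B>(3) by blast
  moreover have "S i \<subseteq> V"
    using i \<open>V \<in> \<B>\<close> \<open>z \<in> V\<close> unfolding J_def by blast
  ultimately show False
    using \<open>x \<in> S i\<close> by blast
qed

lemma closedin_subhedgehog:
  assumes L: "hedgehog L z S I" and "E \<subseteq> I"
  shows "closedin L (insert z (\<Union>i\<in>E. S i))"
proof -
  have "insert z (\<Union>i\<in>E. S i) = topspace L - (\<Union>i\<in>I - E. S i)"
  proof
    show "insert z (\<Union>i\<in>E. S i) \<subseteq> topspace L - (\<Union>i\<in>I - E. S i)"
    proof
      fix x assume x: "x \<in> insert z (\<Union>i\<in>E. S i)"
      have "x \<in> topspace L"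
        using x hedgehog_centre[OF L] hedgehog_spine_subset[OF L] \<open>E \<subseteq> I\<close> by blast
      moreover have "x \<notin> S j" if "j \<in> I - E" for j
        using x that hedgehog_spine_subset[OF L] hedgehog_spines_eq[OF L] \<open>E \<subseteq> I\<close> by blast
      ultimately show "x \<in> topspace L - (\<Union>i\<in>I - E. S i)"
        by blast
    qed
    show "topspace L - (\<Union>i\<in>I - E. S i) \<subseteq> insert z (\<Union>i\<in>E. S i)"
      using hedgehog_covers[OF L] by blast
  qed
  moreover have "openin L (\<Union>i\<in>I - E. S i)"
    using hedgehog_openin_spine[OF L] by blast
  ultimately show ?thesis
    by (simp add: closedin_diff)
qed

lemma hedgehog_fibre_in_finitely_many_spines:
  assumes "compact_space L" and L: "hedgehog L z S I" and "Hausdorff_space M"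
    and g: "continuous_map L M g" and m: "m \<in> topspace M" "m \<noteq> g z"
  obtains A where "finite A" "A \<subseteq> I" "{x \<in> topspace L. g x = m} \<subseteq> (\<Union>i\<in>A. S i)"
proof -
  have "closedin L {x \<in> topspace L. g x \<in> {m}}"
    using closedin_continuous_map_preimage[OF g closedin_Hausdorff_singleton[OF \<open>Hausdorff_space M\<close> m(1)]] .
  then have "compactin L {x \<in> topspace L. g x = m}"
    using assms(1) closedin_compact_space by fastforce
  moreover have "\<And>U. U \<in> S ` I \<Longrightarrow> openin L U"
    using hedgehog_openin_spine[OF L] by blast
  moreover have "{x \<in> topspace L. g x = m} \<subseteq> \<Union> (S ` I)"
    using hedgehog_covers[OF L] m(2) by blast
  ultimately have "\<exists>\<F>. finite \<F> \<and> \<F> \<subseteq> S ` I \<and> {x \<in> topspace L. g x = m} \<subseteq> \<Union>\<F>"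
    by (rule compactinD)
  then obtain \<F> where "finite \<F>" "\<F> \<subseteq> S ` I" "{x \<in> topspace L. g x = m} \<subseteq> \<Union>\<F>"
    by blast
  moreover obtain A where "A \<subseteq> I" "finite A" "\<F> = S ` A"
    using finite_subset_image[OF \<open>finite \<F>\<close> \<open>\<F> \<subseteq> S ` I\<close>] by blast
  ultimately show ?thesis
    using that by blast
qed

lemma hedgehog_ccc_image_of_countable_subhedgehog:
  assumes "compact_space L" and L: "hedgehog L z S I" and M: "Hausdorff_space M" "ccc_space M"
    and g: "continuous_map L M g" "g ` topspace L = topspace M"
  obtains E where "E \<subseteq> I" "countable E" "g ` insert z (\<Union>i\<in>E. S i) = topspace M"
proof -
  define small where "small A = {m \<in> topspace M. {x \<in> topspace L. g x = m} \<subseteq> (\<Union>i\<in>A. S i)}" for A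
  have "closed_map L M g"
    using continuous_imp_closed_map g(1) assms(1) M(1) by blast
  then have small_open: "openin M (small A)" if "A \<subseteq> I" for A
    unfolding small_def using that hedgehog_openin_spine[OF L]
    by (intro openin_closed_map_fibre_subset) blast+
  have small_disjoint: "small A \<inter> small B = {}" if "A \<inter> B = {}" "A \<subseteq> I" "B \<subseteq> I" for A B
  proof -
    have False if m: "m \<in> small A" "m \<in> small B" for m
    proof -
      have "m \<in> g ` topspace L"
        using m(1) unfolding small_def g(2) by blast
      then obtain x where x: "x \<in> topspace L" "g x = m"
        by blast
      then have "x \<in> (\<Union>i\<in>A. S i)" "x \<in> (\<Union>i\<in>B. S i)"
        using m unfolding small_def by auto
      then show False
        using hedgehog_spines_eq[OF L] \<open>A \<inter> B = {}\<close> \<open>A \<subseteq> I\<close> \<open>B \<subseteq> I\<close> by blast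
    qed
    then show ?thesis
      by blast
  qed
  define \<G> where "\<G> = {small A |A. finite A \<and> A \<subseteq> I \<and> small A \<noteq> {}}"
  obtain \<P> where \<P>: "\<P> \<subseteq> \<G>" "disjoint \<P>"
    and max: "\<And>G. G \<in> \<G> \<Longrightarrow> G \<noteq> {} \<Longrightarrow> \<exists>P\<in>\<P>. G \<inter> P \<noteq> {}"
    using maximal_disjoint_subfamily[of \<G>] by blast
  have "\<forall>P\<in>\<P>. openin M P \<and> P \<noteq> {}"
    using \<P>(1) small_open unfolding \<G>_def by auto
  then have "countable \<P>"
    using \<open>ccc_space M\<close> \<P>(2) unfolding ccc_space_def by blast
  have "\<forall>P\<in>\<P>. \<exists>A. finite A \<and> A \<subseteq> I \<and> P = small A"
    using \<P>(1) unfolding \<G>_def by blast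
  then obtain \<alpha> where \<alpha>: "\<And>P. P \<in> \<P> \<Longrightarrow> finite (\<alpha> P)" "\<And>P. P \<in> \<P> \<Longrightarrow> \<alpha> P \<subseteq> I"
    "\<And>P. P \<in> \<P> \<Longrightarrow> P = small (\<alpha> P)"
    by metis
  define E where "E = (\<Union>P\<in>\<P>. \<alpha> P)"
  have "E \<subseteq> I"
    unfolding E_def using \<alpha>(2) by blast
  have "countable E"
    unfolding E_def using \<alpha>(1) \<open>countable \<P>\<close> by (simp add: countable_finite)
  have hit: "m \<in> g ` insert z (\<Union>i\<in>E. S i)" if m: "m \<in> topspace M" for m
  proof (rule ccontr)
    assume not_hit: "m \<notin> g ` insert z (\<Union>i\<in>E. S i)"
    then obtain A where A: "finite A" "A \<subseteq> I" "{x \<in> topspace L. g x = m} \<subseteq> (\<Union>i\<in>A. S i)"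
      using hedgehog_fibre_in_finitely_many_spines[OF assms(1) L M(1) g(1) m] by blast
    have "x \<notin> S i" if "i \<in> E" "g x = m" for i x
      using not_hit that by auto
    then have "m \<in> small (A - E)"
      unfolding small_def using m A(3) by blast
    then have "small (A - E) \<in> \<G>"
      unfolding \<G>_def using A(1,2) by blast
    then obtain P where P: "P \<in> \<P>" "small (A - E) \<inter> P \<noteq> {}"
      using max \<open>m \<in> small (A - E)\<close> by blast
    have "(A - E) \<inter> \<alpha> P = {}"
      using P(1) unfolding E_def by blast
    then have "small (A - E) \<inter> small (\<alpha> P) = {}"
      using small_disjoint A(2) \<alpha>(2)[OF P(1)] by blast
    then show False
      using P \<alpha>(3) by metis
  qed
  have "insert z (\<Union>i\<in>E. S i) \<subseteq> topspace L"
    using hedgehog_centre[OF L] hedgehog_spine_subset[OF L] \<open>E \<subseteq> I\<close> by blast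
  then have "g ` insert z (\<Union>i\<in>E. S i) = topspace M"
    using hit g(2) by blast
  then show ?thesis
    using that \<open>E \<subseteq> I\<close> \<open>countable E\<close> by blast
qed

lemma hedgehog_ccc_image_metrizable:
  assumes "compact_space L" and L: "hedgehog L z S I"
    and sub: "countable_subhedgehogs_metrizable L z S I"
    and M: "Hausdorff_space M" "ccc_space M"
    and g: "continuous_map L M g" "g ` topspace L = topspace M"
  shows "metrizable_space M"
proof -
  obtain E where E: "E \<subseteq> I" "countable E" "g ` insert z (\<Union>i\<in>E. S i) = topspace M"
    using hedgehog_ccc_image_of_countable_subhedgehog[OF assms(1) L M g] by blast
  define Y where "Y = insert z (\<Union>i\<in>E. S i)"
  have "closedin L Y"
    unfolding Y_def using closedin_subhedgehog[OF L E(1)] .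
  then have "compact_space (subtopology L Y)" "topspace (subtopology L Y) = Y"
    using assms(1) closedin_compact_space closedin_subset compact_space_subtopology by fastforce+
  moreover have "continuous_map (subtopology L Y) M g"
    using g(1) by (rule continuous_map_from_subtopology)
  ultimately show ?thesis
    using metrizable_space_continuous_map_image M(1) E sub
    unfolding Y_def countable_subhedgehogs_metrizable_def by metis
qed

lemma metrizable_compact_subspace_countable_support:
  fixes Y :: "('i \<Rightarrow> real) set"
  assumes "compact_space (subtopology (powertop_real I) Y)" "countable E" "E \<subseteq> I"
    and vanish: "\<And>y i. y \<in> Y \<Longrightarrow> i \<in> I - E \<Longrightarrow> y i = 0"
  shows "metrizable_space (subtopology (powertop_real I) Y)"
proof (rule compact_injection_into_metrizable_imp_metrizable)
  show "continuous_map (subtopology (powertop_real I) Y) (powertop_real E) (\<lambda>y. restrict y E)"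
    using \<open>E \<subseteq> I\<close>
    by (auto simp: continuous_map_componentwise
        intro!: continuous_map_from_subtopology continuous_map_product_projection)
  show "inj_on (\<lambda>y. restrict y E) (topspace (subtopology (powertop_real I) Y))"
  proof (rule inj_onI)
    fix y y' assume y: "y \<in> topspace (subtopology (powertop_real I) Y)"
      "y' \<in> topspace (subtopology (powertop_real I) Y)"
      and eq: "restrict y E = restrict y' E"
    have "y \<in> extensional I" "y' \<in> extensional I"
      using y by (auto simp: PiE_def)
    moreover have "y i = y' i" if "i \<in> I" for i
    proof (cases "i \<in> E")
      case True
      then show ?thesis
        using eq by (metis restrict_apply')
    next
      case False
      then show ?thesis
        using y vanish that by (metis DiffI IntE topspace_subtopology)
    qed
    ultimately show "y = y'"
      by (rule extensionalityI)
  qed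
qed (use assms metrizable_space_countable_product_euclideanreal in auto)

lemma hedgehog_in_powertop_real:
  fixes L :: "('i \<Rightarrow> real) set"
  assumes L: "L \<subseteq> topspace (powertop_real I)" "(\<lambda>i\<in>I. 0) \<in> L"
    and nonzero: "\<And>i. i \<in> I \<Longrightarrow> \<exists>y\<in>L. y i \<noteq> 0"
    and single: "\<And>y i j. y \<in> L \<Longrightarrow> i \<in> I \<Longrightarrow> j \<in> I \<Longrightarrow> y i \<noteq> 0 \<Longrightarrow> y j \<noteq> 0 \<Longrightarrow> i = j"
  shows "hedgehog (subtopology (powertop_real I) L) (\<lambda>i\<in>I. 0) (\<lambda>i. {y \<in> L. y i \<noteq> 0}) I"
  unfolding hedgehog_def
proof (intro conjI ballI)
  have top: "topspace (subtopology (powertop_real I) L) = L"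
    using L(1) by (rule topspace_subtopology_subset)
  then show "(\<lambda>i\<in>I. 0) \<in> topspace (subtopology (powertop_real I) L)"
    using L(2) by simp
  fix i assume "i \<in> I"
  have "openin (powertop_real I) {y \<in> topspace (powertop_real I). y i \<in> - {0}}"
    using continuous_map_product_projection[OF \<open>i \<in> I\<close>]
    by (rule openin_continuous_map_preimage) auto
  then have "openin (subtopology (powertop_real I) L) (L \<inter> {y \<in> topspace (powertop_real I). y i \<in> - {0}})"
    by (rule openin_subtopology_Int2)
  moreover have "L \<inter> {y \<in> topspace (powertop_real I). y i \<in> - {0}} = {y \<in> L. y i \<noteq> 0}"
    using L(1) by auto
  ultimately show "openin (subtopology (powertop_real I) L) {y \<in> L. y i \<noteq> 0}"
    by simp
  show "{y \<in> L. y i \<noteq> 0} \<noteq> {}"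
    using nonzero[OF \<open>i \<in> I\<close>] by blast
next
  show "disjoint_family_on (\<lambda>i. {y \<in> L. y i \<noteq> 0}) I"
    unfolding disjoint_family_on_def using single by blast
next
  have "\<exists>i\<in>I. y i \<noteq> 0" if "y \<in> L" "y \<noteq> (\<lambda>i\<in>I. 0)" for y
  proof (rule ccontr)
    assume "\<not> (\<exists>i\<in>I. y i \<noteq> 0)"
    moreover have "y \<in> extensional I"
      using that(1) L(1) by (auto simp: PiE_def)
    ultimately have "y = (\<lambda>i\<in>I. 0)"
      by (intro extensionalityI[of _ I]) auto
    then show False
      using that(2) by blast
  qed
  then show "(\<Union>i\<in>I. {y \<in> L. y i \<noteq> 0}) = topspace (subtopology (powertop_real I) L) - {\<lambda>i\<in>I. 0}"
    using topspace_subtopology_subset[OF L(1)] by auto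
qed

lemma countable_subhedgehogs_metrizable_in_powertop_real:
  fixes L :: "('i \<Rightarrow> real) set"
  assumes L: "L \<subseteq> topspace (powertop_real I)" "(\<lambda>i\<in>I. 0) \<in> L"
    and nonzero: "\<And>i. i \<in> I \<Longrightarrow> \<exists>y\<in>L. y i \<noteq> 0"
    and single: "\<And>y i j. y \<in> L \<Longrightarrow> i \<in> I \<Longrightarrow> j \<in> I \<Longrightarrow> y i \<noteq> 0 \<Longrightarrow> y j \<noteq> 0 \<Longrightarrow> i = j"
    and "compact_space (subtopology (powertop_real I) L)"
  shows "countable_subhedgehogs_metrizable (subtopology (powertop_real I) L) (\<lambda>i\<in>I. 0)
           (\<lambda>i. {y \<in> L. y i \<noteq> 0}) I"
  unfolding countable_subhedgehogs_metrizable_def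
proof (intro allI impI)
  fix E assume "E \<subseteq> I" "countable E"
  define Y where "Y = insert (\<lambda>i\<in>I. 0) (\<Union>i\<in>E. {y \<in> L. y i \<noteq> 0})"
  have "closedin (subtopology (powertop_real I) L) Y"
    unfolding Y_def using closedin_subhedgehog[OF hedgehog_in_powertop_real[OF assms(1-4)] \<open>E \<subseteq> I\<close>] .
  then have "compact_space (subtopology (powertop_real I) (L \<inter> Y))"
    using assms(5) closedin_compact_space compact_space_subtopology
    by (metis subtopology_subtopology)
  moreover have "y i = 0" if "y \<in> L \<inter> Y" "i \<in> I - E" for y i
    using that single \<open>E \<subseteq> I\<close> unfolding Y_def by auto
  ultimately show "metrizable_space (subtopology (subtopology (powertop_real I) L)
           (insert (\<lambda>i\<in>I. 0) (\<Union>i\<in>E. {y \<in> L. y i \<noteq> 0})))"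
    unfolding Y_def[symmetric] subtopology_subtopology
    using metrizable_compact_subspace_countable_support \<open>E \<subseteq> I\<close> \<open>countable E\<close> by blast
qed

lemma compact_space_infinite_disjoint_openin_not_cover:
  assumes "compact_space K" "infinite \<U>" "disjoint \<U>"
    and \<U>: "\<And>U. U \<in> \<U> \<Longrightarrow> openin K U" "\<And>U. U \<in> \<U> \<Longrightarrow> U \<noteq> {}"
  obtains x where "x \<in> topspace K" "x \<notin> \<Union>\<U>"
proof -
  have "\<not> topspace K \<subseteq> \<Union>\<U>"
  proof
    assume "topspace K \<subseteq> \<Union>\<U>"
    then obtain \<F> where \<F>: "finite \<F>" "\<F> \<subseteq> \<U>" "topspace K \<subseteq> \<Union>\<F>"
      using assms(1) \<U>(1) unfolding compact_space_alt by meson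
    have "\<not> \<U> \<subseteq> \<F>"
      using \<F>(1) \<open>infinite \<U>\<close> finite_subset by auto
    then obtain U where U: "U \<in> \<U>" "U \<notin> \<F>"
      by blast
    obtain x where "x \<in> U"
      using \<U>(2)[OF U(1)] by blast
    moreover have "x \<in> topspace K"
      using \<open>x \<in> U\<close> \<U>(1)[OF U(1)] openin_subset by blast
    then obtain V where "V \<in> \<F>" "x \<in> V"
      using \<F>(3) by blast
    ultimately show False
      using pairwiseD[OF \<open>disjoint \<U>\<close> U(1)] \<F>(2) U(2) unfolding disjnt_def by blast
  qed
  then show ?thesis
    using that by blast
qed

lemma Urysohn_bump:
  assumes "normal_space K" "Hausdorff_space K" "openin K U" "p \<in> U"
  obtains \<phi> where "continuous_map K euclideanreal \<phi>" "\<phi> p = 1" "\<And>x. x \<in> topspace K - U \<Longrightarrow> \<phi> x = 0"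
proof -
  have "p \<in> topspace K"
    using openin_subset[OF assms(3)] assms(4) by blast
  then have "closedin K {p}"
    by (rule closedin_Hausdorff_singleton[OF assms(2)])
  moreover have "closedin K (topspace K - U)"
    by (intro closedin_diff closedin_topspace assms(3))
  moreover have "disjnt (topspace K - U) {p}"
    using assms(4) by (auto simp: disjnt_def)
  ultimately obtain \<phi> where \<phi>: "continuous_map K euclideanreal \<phi>"
    "\<phi> ` (topspace K - U) \<subseteq> {0}" "\<phi> ` {p} \<subseteq> {1}"
    using Urysohn_lemma_alt[OF assms(1), where a = 0 and b = 1] by metis
  show ?thesis
  proof (rule that)
    show "\<phi> p = 1" "\<And>x. x \<in> topspace K - U \<Longrightarrow> \<phi> x = 0"
      using \<phi>(2,3) by auto
  qed (rule \<phi>(1))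
qed

lemma non_ccc_imp_hedgehog_image:
  fixes K :: "'a topology"
  assumes "compact_space K" "Hausdorff_space K" "\<not> ccc_space K"
  obtains L :: "('a set \<Rightarrow> real) topology" and F z S and I :: "'a set set"
  where "continuous_map K L F" "F ` topspace K = topspace L" "compact_space L" "Hausdorff_space L"
    "hedgehog L z S I" "uncountable I"
    "countable_subhedgehogs_metrizable L z S I"
proof -
  obtain \<U> where \<U>: "\<And>U. U \<in> \<U> \<Longrightarrow> openin K U" "\<And>U. U \<in> \<U> \<Longrightarrow> U \<noteq> {}" "disjoint \<U>"
    "uncountable \<U>"
    using assms(3) unfolding ccc_space_def by blast
  have "normal_space K"
    using compact_Hausdorff_or_regular_imp_normal_space assms(1,2) by blast
  have "\<exists>\<phi> p. continuous_map K euclideanreal \<phi> \<and> p \<in> U \<and> \<phi> p = 1 \<and> (\<forall>x\<in>topspace K - U. \<phi> x = 0)"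
    if U: "U \<in> \<U>" for U
  proof -
    obtain p where "p \<in> U"
      using \<U>(2)[OF U] by blast
    then show ?thesis
      using Urysohn_bump[OF \<open>normal_space K\<close> assms(2) \<U>(1)[OF U]] by metis
  qed
  then obtain \<phi> p where \<phi>: "\<And>U. U \<in> \<U> \<Longrightarrow> continuous_map K euclideanreal (\<phi> U)"
    "\<And>U. U \<in> \<U> \<Longrightarrow> p U \<in> U" "\<And>U. U \<in> \<U> \<Longrightarrow> \<phi> U (p U) = 1"
    "\<And>U x. U \<in> \<U> \<Longrightarrow> x \<in> topspace K - U \<Longrightarrow> \<phi> U x = 0"
    by metis
  have "infinite \<U>"
    using \<U>(4) countable_finite by blast
  then obtain x0 where x0: "x0 \<in> topspace K" "x0 \<notin> \<Union>\<U>"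
    using compact_space_infinite_disjoint_openin_not_cover[OF assms(1) _ \<U>(3,1,2)] by blast
  define F where "F x = (\<lambda>U\<in>\<U>. \<phi> U x)" for x
  define L where "L = F ` topspace K"
  have cF: "continuous_map K (powertop_real \<U>) F"
    unfolding F_def using \<phi>(1) by (auto simp: continuous_map_componentwise)
  then have LP: "L \<subseteq> topspace (powertop_real \<U>)"
    unfolding L_def by (rule continuous_map_image_subset_topspace)
  have "F x0 = (\<lambda>U\<in>\<U>. 0)"
    unfolding F_def using \<phi>(4) x0 by (auto simp: fun_eq_iff)
  then have zero: "(\<lambda>U\<in>\<U>. 0) \<in> L"
    unfolding L_def using x0(1) by (metis image_eqI)
  have nonzero: "\<exists>y\<in>L. y U \<noteq> 0" if "U \<in> \<U>" for U
  proof -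
    have "p U \<in> topspace K"
      using \<phi>(2) \<U>(1) that openin_subset by blast
    moreover have "F (p U) U = 1"
      unfolding F_def using \<phi>(3) that by simp
    ultimately show ?thesis
      unfolding L_def by (metis image_eqI zero_neq_one)
  qed
  have single: "U = V" if "y \<in> L" "U \<in> \<U>" "V \<in> \<U>" "y U \<noteq> 0" "y V \<noteq> 0" for y U V
  proof -
    obtain x where "x \<in> topspace K" "y = F x"
      using \<open>y \<in> L\<close> unfolding L_def by blast
    then have "x \<in> U" "x \<in> V"
      using \<phi>(4) that unfolding F_def by auto
    then show ?thesis
      using pairwiseD[OF \<U>(3)] that(2,3) unfolding disjnt_def by blast
  qed
  have "compactin (powertop_real \<U>) L"
    unfolding L_def using image_compactin[OF _ cF] assms(1) unfolding compact_space_def by blast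
  then have compact: "compact_space (subtopology (powertop_real \<U>) L)"
    by (rule compact_space_subtopology)
  show ?thesis
  proof (rule that)
    show "hedgehog (subtopology (powertop_real \<U>) L) (\<lambda>U\<in>\<U>. 0) (\<lambda>U. {y \<in> L. y U \<noteq> 0}) \<U>"
      by (rule hedgehog_in_powertop_real[OF LP zero nonzero single])
    show "countable_subhedgehogs_metrizable (subtopology (powertop_real \<U>) L) (\<lambda>U\<in>\<U>. 0)
        (\<lambda>U. {y \<in> L. y U \<noteq> 0}) \<U>"
      by (rule countable_subhedgehogs_metrizable_in_powertop_real[OF LP zero nonzero single compact])
    show "continuous_map K (subtopology (powertop_real \<U>) L) F"
      using cF unfolding L_def by (simp add: continuous_map_in_subtopology)
    show "F ` topspace K = topspace (subtopology (powertop_real \<U>) L)"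
      using topspace_subtopology_subset[OF LP] by (simp add: L_def)
    show "Hausdorff_space (subtopology (powertop_real \<U>) L)"
      by (simp add: Hausdorff_space_subtopology Hausdorff_space_product_topology)
  qed (use compact \<U>(4) in auto)
qed

lemma perp_homeomorphic_space:
  assumes "perp C L" "L homeomorphic_space L'"
  shows "perp C L'"
  unfolding perp_def
proof (intro conjI allI impI)
  have "compact_space L" "Hausdorff_space L"
    using assms(1) unfolding perp_def compact_Hausdorff_def by auto
  then show "compact_Hausdorff L'"
    unfolding compact_Hausdorff_def
    using homeomorphic_compact_space[OF assms(2)] homeomorphic_Hausdorff_space[OF assms(2)] by simp
  obtain h where h: "homeomorphic_map L L' h"
    using assms(2) homeomorphic_space by blast
  fix M f assume "continuous_map L' M f \<and> f ` topspace L' = topspace M \<and> C M"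
  then have f: "continuous_map L' M f" "f ` topspace L' = topspace M" "C M"
    by auto
  have "continuous_map L M (f \<circ> h)"
    using continuous_map_compose[OF homeomorphic_imp_continuous_map[OF h] f(1)] .
  moreover have "(f \<circ> h) ` topspace L = topspace M"
    unfolding image_comp[symmetric] using homeomorphic_imp_surjective_map[OF h] f(2) by simp
  ultimately show "metrizable_space M"
    using assms(1) f(3) unfolding perp_def by blast
qed

lemma perp_imp_metrizable:
  assumes "perp C L" "C M" "L homeomorphic_space M"
  shows "metrizable_space L"
proof -
  obtain h where h: "homeomorphic_map L M h"
    using assms(3) homeomorphic_space by blast
  have "metrizable_space M"
    using assms(1,2) homeomorphic_imp_continuous_map[OF h] homeomorphic_imp_surjective_map[OF h]
    unfolding perp_def by blast
  then show ?thesis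
    using homeomorphic_metrizable_space[OF assms(3)] by blast
qed

lemma hedgehog_perp_CCC:
  assumes "compact_space L" "Hausdorff_space L" "hedgehog L z S I"
    and "countable_subhedgehogs_metrizable L z S I"
  shows "perp CCC L"
  unfolding perp_def
proof (intro conjI allI impI)
  show "compact_Hausdorff L"
    using assms(1,2) unfolding compact_Hausdorff_def by blast
  fix M g assume g: "continuous_map L M g \<and> g ` topspace L = topspace M \<and> CCC M"
  then have "Hausdorff_space M" "ccc_space M"
    unfolding CCC_def compact_Hausdorff_def by auto
  with g show "metrizable_space M"
    by (intro hedgehog_ccc_image_metrizable[OF assms(1,3,4)]) auto
qed

theorem corollary3p3:
  fixes K :: "'a topology"
  shows "CCC K \<longleftrightarrow> CCC_perp_perp K"
proof
  assume "CCC K"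
  show "CCC_perp_perp K"
    unfolding CCC_perp_perp_def perp_def
  proof (intro conjI allI impI)
    show "compact_Hausdorff K"
      using \<open>CCC K\<close> unfolding CCC_def by blast
    fix L :: "'a set topology" and f
    assume f: "continuous_map K L f \<and> f ` topspace K = topspace L \<and> CCC_perp L"
    then have perp: "perp (CCC :: 'a set set topology \<Rightarrow> bool) L"
      unfolding CCC_perp_def by blast
    have "ccc_space L"
      using ccc_space_continuous_map_image[of K L f] f \<open>CCC K\<close> unfolding CCC_def by blast
    moreover have "compact_Hausdorff L"
      using perp unfolding perp_def by blast
    ultimately have "CCC L"
      unfolding CCC_def by blast
    obtain M :: "'a set set topology" where M: "L homeomorphic_space M"
      by (rule homeomorphic_space_singletons)
    then have "CCC M"
      using homeomorphic_CCC[OF M] \<open>CCC L\<close> by simp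
    then show "metrizable_space L"
      by (rule perp_imp_metrizable[OF perp _ M])
  qed
next
  assume "CCC_perp_perp K"
  then have K: "compact_space K" "Hausdorff_space K"
    unfolding CCC_perp_perp_def perp_def compact_Hausdorff_def by auto
  show "CCC K"
  proof (rule ccontr)
    assume "\<not> CCC K"
    then have "\<not> ccc_space K"
      using K unfolding CCC_def compact_Hausdorff_def by blast
    then obtain L0 :: "('a set \<Rightarrow> real) topology" and F z S and I :: "'a set set"
      where F: "continuous_map K L0 F" "F ` topspace K = topspace L0"
        and L0: "compact_space L0" "Hausdorff_space L0" "hedgehog L0 z S I" "uncountable I"
        and sub: "countable_subhedgehogs_metrizable L0 z S I"
      by (rule non_ccc_imp_hedgehog_image[OF K])
    obtain L :: "'a set topology" and h where h: "homeomorphic_map L0 L h"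
      using homeomorphic_map_fibres[OF F(2)] by blast
    then have "L0 homeomorphic_space L"
      by (rule homeomorphic_map_imp_homeomorphic_space)
    then have "CCC_perp L"
      unfolding CCC_perp_def by (rule perp_homeomorphic_space[OF hedgehog_perp_CCC[OF L0(1-3) sub]])
    moreover have "continuous_map K L (h \<circ> F)"
      using continuous_map_compose[OF F(1) homeomorphic_imp_continuous_map[OF h]] .
    moreover have "(h \<circ> F) ` topspace K = topspace L"
      unfolding image_comp[symmetric] using homeomorphic_imp_surjective_map[OF h] F(2) by simp
    ultimately have "metrizable_space L"
      using \<open>CCC_perp_perp K\<close> unfolding CCC_perp_perp_def perp_def by blast
    then have "metrizable_space L0"
      using homeomorphic_metrizable_space[OF \<open>L0 homeomorphic_space L\<close>] by blast
    then show False
      using hedgehog_not_metrizable[OF L0] by blast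
  qed
qed

end
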